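(* Let $\Gamma$ be a primitive strongly regular graph. Then $E(\Gamma)=E(\bar\Gamma)$ if and only if either $\Gamma$ is a conference graph, or $\Gamma$ has $OA(n,m)$ parameters, i.e. parameters $(n^2, m(n-1), m^2-3m+n, m(m-1))$, for some positive integers $n,m$ with $m\notin\{n,n+1\}$. Moreover, if $E(\Gamma)=E(\bar\Gamma)$ and $\Gamma$ is not a conference graph, then $\Gamma$ and $\bar\Gamma$ are not isospectral.
   Context: A strongly regular graph with parameters $(n,k,e,d)$ is a $k$-regular simple graph on $n$ vertices, neither complete nor edgeless, in which adjacent vertices have $e$ common neighbours and distinct non-adjacent vertices have $d$ common neighbours; it is primitive if it and its complement $\bar\Gamma$ are both connected. A conference graph is a strongly regular graph with parameters $(4t+1,2t,t-1,t)$. The energy $E$ is the sum of the absolute values of the adjacency eigenvalues (with multiplicity); isospectral means equal adjacency spectra with multiplicities. *)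

theory Defs
  imports "Jordan_Normal_Form.Char_Poly" "HOL-Computational_Algebra.Fundamental_Theorem_Algebra"
begin

text \<open>A graph on the vertex set {0..<N} is given by an adjacency relation E.\<close>

definition simple_graph :: "nat \<Rightarrow> (nat \<Rightarrow> nat \<Rightarrow> bool) \<Rightarrow> bool" where
  "simple_graph N E \<longleftrightarrow> (\<forall>i<N. \<forall>j<N. E i j = E j i) \<and> (\<forall>i<N. \<not> E i i)"

definition compl_graph :: "(nat \<Rightarrow> nat \<Rightarrow> bool) \<Rightarrow> nat \<Rightarrow> nat \<Rightarrow> bool" where
  "compl_graph E = (\<lambda>i j. i \<noteq> j \<and> \<not> E i j)"

definition graph_connected :: "nat \<Rightarrow> (nat \<Rightarrow> nat \<Rightarrow> bool) \<Rightarrow> bool" where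
  "graph_connected N E \<longleftrightarrow>
     (\<forall>i<N. \<forall>j<N. (\<lambda>x y. x < N \<and> y < N \<and> E x y)\<^sup>*\<^sup>* i j)"

definition neighbours :: "nat \<Rightarrow> (nat \<Rightarrow> nat \<Rightarrow> bool) \<Rightarrow> nat \<Rightarrow> nat set" where
  "neighbours N E i = {j. j < N \<and> E i j}"

definition strongly_regular ::
  "nat \<Rightarrow> (nat \<Rightarrow> nat \<Rightarrow> bool) \<Rightarrow> nat \<Rightarrow> nat \<Rightarrow> nat \<Rightarrow> nat \<Rightarrow> bool" where
  "strongly_regular N E n k e d \<longleftrightarrow>
     simple_graph N E \<and> n = N \<and>
     (\<forall>i<N. card (neighbours N E i) = k) \<and>
     \<not> (\<forall>i<N. \<forall>j<N. i \<noteq> j \<longrightarrow> E i j) \<and>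
     \<not> (\<forall>i<N. \<forall>j<N. \<not> E i j) \<and>
     (\<forall>i<N. \<forall>j<N. E i j \<longrightarrow> card (neighbours N E i \<inter> neighbours N E j) = e) \<and>
     (\<forall>i<N. \<forall>j<N. i \<noteq> j \<and> \<not> E i j \<longrightarrow> card (neighbours N E i \<inter> neighbours N E j) = d)"

definition is_srg :: "nat \<Rightarrow> (nat \<Rightarrow> nat \<Rightarrow> bool) \<Rightarrow> bool" where
  "is_srg N E \<longleftrightarrow> (\<exists>k e d. strongly_regular N E N k e d)"

definition primitive_srg :: "nat \<Rightarrow> (nat \<Rightarrow> nat \<Rightarrow> bool) \<Rightarrow> bool" where
  "primitive_srg N E \<longleftrightarrow> is_srg N E \<and> graph_connected N E \<and> graph_connected N (compl_graph E)"

definition conference_graph :: "nat \<Rightarrow> (nat \<Rightarrow> nat \<Rightarrow> bool) \<Rightarrow> bool" where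
  "conference_graph N E \<longleftrightarrow> (\<exists>t::nat. t \<ge> 1 \<and> strongly_regular N E (4*t+1) (2*t) (t-1) t)"

text \<open>OA(n,m) parameters (n^2, m(n-1), m^2-3m+n, m(m-1)); the third parameter is computed in int.\<close>
definition has_OA_params :: "nat \<Rightarrow> (nat \<Rightarrow> nat \<Rightarrow> bool) \<Rightarrow> nat \<Rightarrow> nat \<Rightarrow> bool" where
  "has_OA_params N E n m \<longleftrightarrow>
     (\<exists>e. int e = int m ^ 2 - 3 * int m + int n \<and>
          strongly_regular N E (n^2) (m*(n-1)) e (m*(m-1)))"

definition adj_matrix :: "nat \<Rightarrow> (nat \<Rightarrow> nat \<Rightarrow> bool) \<Rightarrow> complex mat" where
  "adj_matrix N E = mat N N (\<lambda>(i,j). if E i j then 1 else 0)"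

definition adj_spectrum :: "nat \<Rightarrow> (nat \<Rightarrow> nat \<Rightarrow> bool) \<Rightarrow> complex multiset" where
  "adj_spectrum N E = proots (char_poly (adj_matrix N E))"

definition energy :: "nat \<Rightarrow> (nat \<Rightarrow> nat \<Rightarrow> bool) \<Rightarrow> real" where
  "energy N E = (\<Sum>x\<in>#adj_spectrum N E. cmod x)"

definition isospectral :: "nat \<Rightarrow> (nat \<Rightarrow> nat \<Rightarrow> bool) \<Rightarrow> (nat \<Rightarrow> nat \<Rightarrow> bool) \<Rightarrow> bool" where
  "isospectral N E F \<longleftrightarrow> adj_spectrum N E = adj_spectrum N F"

end

theory Submission
  imports Defs "Jordan_Normal_Form.Schur_Decomposition"
begin

(* A primitive strongly regular graph with parameters (N,k,e,d) has eigenvalues k, r > 0 and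
   s < -1 with multiplicities 1, f, g, and its complement has eigenvalues N-k-1, -1-s, -1-r
   with multiplicities 1, g, f.  Since f + g = N - 1, the energies of the graph and of its
   complement differ by 2(k - f), so they agree iff f = k; as the eigenvalues sum to zero, this
   means k(r+1) + (N-1-k)s = 0.  If moreover f = g, this forces the conference parameters.
   If f ~= g, then (f-g)(r-s) = -2k - (N-1)(e-d) shows that r and s are rational, hence
   integers, and solving the parameter equations gives the OA(n,m) parameters with n = r - s
   and m = -s.  Finally, isospectrality would give N k = tr(A^2) = tr((J-I-A)^2) = N (N-k-1),
   hence f = g = k. *)

section \<open>Traces and eigenvalues of complex matrices\<close>

definition mat_trace :: "'a::comm_ring_1 mat \<Rightarrow> 'a" where
  "mat_trace A = (\<Sum>i<dim_row A. A $$ (i,i))"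

lemma mat_trace_mult_comm:
  assumes "A \<in> carrier_mat n m" "B \<in> carrier_mat m n"
  shows "mat_trace (A * B) = mat_trace (B * A)"
proof -
  have "mat_trace (A * B) = (\<Sum>i<n. \<Sum>j<m. A $$ (i,j) * B $$ (j,i))"
    using assms by (simp add: mat_trace_def scalar_prod_def atLeast0LessThan)
  also have "\<dots> = (\<Sum>j<m. \<Sum>i<n. B $$ (j,i) * A $$ (i,j))"
    by (subst sum.swap) (simp add: mult.commute)
  also have "\<dots> = mat_trace (B * A)"
    using assms by (simp add: mat_trace_def scalar_prod_def atLeast0LessThan)
  finally show ?thesis .
qed

lemma mat_trace_similar:
  assumes "similar_mat_wit A B P Q" "A \<in> carrier_mat n n"
  shows "mat_trace A = mat_trace B"
proof -
  from similar_mat_witD2[OF assms(2) assms(1)]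
  have B: "B \<in> carrier_mat n n" and P: "P \<in> carrier_mat n n" and Q: "Q \<in> carrier_mat n n"
    and QP: "Q * P = 1\<^sub>m n" and AB: "A = P * B * Q" by auto
  have "mat_trace A = mat_trace ((P * B) * Q)"
    using AB by simp
  also have "\<dots> = mat_trace (Q * (P * B))"
    using P B Q by (intro mat_trace_mult_comm[of _ n n]) auto
  also have "Q * (P * B) = (Q * P) * B"
    using P B Q by (simp add: assoc_mult_mat[of _ n n _ n _ n])
  also have "\<dots> = B"
    using QP B by simp
  finally show ?thesis .
qed

lemma upper_triangular_mult_diag:
  assumes "B \<in> carrier_mat n n" "C \<in> carrier_mat n n"
    and "upper_triangular B" "upper_triangular C" "i < n"
  shows "(B * C) $$ (i,i) = B $$ (i,i) * C $$ (i,i)"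
proof -
  have "(B * C) $$ (i,i) = (\<Sum>j\<in>{0..<n}. B $$ (i,j) * C $$ (j,i))"
    using assms by (simp add: scalar_prod_def)
  also have "\<dots> = (\<Sum>j\<in>{0..<n}. if j = i then B $$ (i,i) * C $$ (i,i) else 0)"
    using assms by (intro sum.cong refl) (auto simp: upper_triangular_def dest: linorder_neqE_nat)
  also have "\<dots> = B $$ (i,i) * C $$ (i,i)"
    using assms by simp
  finally show ?thesis .
qed

lemma proots_prod_linear_factors: "proots (\<Prod>x\<leftarrow>xs. [:- x, 1:]) = mset (xs :: complex list)"
proof (induction xs)
  case (Cons x xs)
  have "proots (\<Prod>y\<leftarrow>x # xs. [:- y, 1:]) = proots [:- x, 1:] + proots (\<Prod>y\<leftarrow>xs. [:- y, 1:])"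
    by (simp only: list.map prod_list.Cons, rule proots_mult) (auto simp: prod_list_zero_iff)
  then show ?case
    using Cons proots_linear_factor[of "-x"] by simp
qed simp

lemma char_poly_triangularization:
  fixes A :: "complex mat"
  assumes A: "A \<in> carrier_mat n n"
  obtains B P Q where "similar_mat_wit A B P Q" "B \<in> carrier_mat n n" "upper_triangular B"
    "proots (char_poly A) = mset (diag_mat B)"
proof -
  from char_poly_factorized[OF A] obtain as where cp: "char_poly A = (\<Prod>x\<leftarrow>as. [:- x, 1:])"
    by blast
  obtain B P Q where sch: "schur_decomposition A as = (B,P,Q)"
    by (cases "schur_decomposition A as") auto
  from schur_decomposition[OF A cp sch] similar_mat_witD2[OF A] show thesis
    by (intro that[of B P Q]) (auto simp: cp proots_prod_linear_factors)
qed

lemma sum_mset_diag_mat: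
  assumes "B \<in> carrier_mat n n"
  shows "(\<Sum>x\<in>#mset (diag_mat B). h x) = (\<Sum>i<n. h (B $$ (i,i)))"
proof -
  have "mset (diag_mat B) = image_mset (\<lambda>i. B $$ (i,i)) (mset_set {0..<n})"
    using assms by (simp add: diag_mat_def)
  then show ?thesis
    by (simp add: sum_unfold_sum_mset atLeast0LessThan image_mset.compositionality o_def)
qed

lemma sum_proots_char_poly:
  fixes A :: "complex mat"
  assumes A: "A \<in> carrier_mat n n"
  shows "(\<Sum>x\<in>#proots (char_poly A). x) = mat_trace A"
    and "(\<Sum>x\<in>#proots (char_poly A). x^2) = mat_trace (A * A)"
proof -
  obtain B P Q where sim: "similar_mat_wit A B P Q" and B: "B \<in> carrier_mat n n"
    and ut: "upper_triangular B" and roots: "proots (char_poly A) = mset (diag_mat B)"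
    using char_poly_triangularization[OF A] by blast
  show "(\<Sum>x\<in>#proots (char_poly A). x) = mat_trace A"
    using mat_trace_similar[OF sim A] sum_mset_diag_mat[OF B, of "\<lambda>x. x"] A B
    by (simp add: roots mat_trace_def)
  have "similar_mat_wit (A * A) (B * B) P Q"
    using similar_mat_wit_pow[OF sim, of 2] A B by (simp add: numeral_2_eq_2)
  then have "mat_trace (A * A) = mat_trace (B * B)"
    using A by (simp add: mat_trace_similar[of _ _ _ _ n])
  also have "\<dots> = (\<Sum>i<n. B $$ (i,i) ^ 2)"
    unfolding mat_trace_def using B ut
    by (intro sum.cong) (simp_all add: upper_triangular_mult_diag power2_eq_square del: index_mult_mat(1))
  finally show "(\<Sum>x\<in>#proots (char_poly A). x^2) = mat_trace (A * A)"
    using B by (simp add: roots sum_mset_diag_mat)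
qed

lemma proots_char_poly_eigenvalue:
  fixes A :: "'a::field mat"
  assumes "A \<in> carrier_mat n n" "x \<in># proots (char_poly A)"
  shows "eigenvalue A x"
proof -
  have "char_poly A \<noteq> 0"
    using degree_monic_char_poly[OF assms(1)] by auto
  then show ?thesis
    using assms by (simp add: eigenvalue_root_char_poly)
qed

lemma mset_eq_replicate_count3:
  assumes "set_mset M \<subseteq> {x, y, z}" "distinct [x, y, z]"
  shows "M = replicate_mset (count M x) x + replicate_mset (count M y) y
    + replicate_mset (count M z) z"
proof (rule multiset_eqI)
  fix w
  show "count M w = count (replicate_mset (count M x) x + replicate_mset (count M y) y
      + replicate_mset (count M z) z) w"
    using assms by (cases "w \<in> {x, y, z}") (auto simp: count_eq_zero_iff)
qed

section \<open>Strongly regular matrices\<close>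

text \<open>The entrywise form of \<open>A\<^sup>2 = k I + e A + d (J - I - A)\<close> for a symmetric matrix \<open>A\<close>
  with zero diagonal and row sums \<open>k\<close>.\<close>

definition srg_matrix :: "nat \<Rightarrow> (nat \<Rightarrow> nat \<Rightarrow> real) \<Rightarrow> real \<Rightarrow> real \<Rightarrow> real \<Rightarrow> bool" where
  "srg_matrix N a k e d \<longleftrightarrow>
     (\<forall>i<N. \<forall>j<N. a i j = a j i) \<and> (\<forall>i<N. a i i = 0) \<and> (\<forall>i<N. (\<Sum>j<N. a i j) = k) \<and>
     (\<forall>i<N. \<forall>t<N. (\<Sum>j<N. a i j * a j t) = (if i = t then k - d else 0) + (e - d) * a i t + d)"

lemma
  assumes "srg_matrix N a k e d"
  shows srg_matrix_sym: "i < N \<Longrightarrow> j < N \<Longrightarrow> a i j = a j i"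
    and srg_matrix_diag: "i < N \<Longrightarrow> a i i = 0"
    and srg_matrix_row_sum: "i < N \<Longrightarrow> (\<Sum>j<N. a i j) = k"
    and srg_matrix_square: "i < N \<Longrightarrow> t < N \<Longrightarrow>
      (\<Sum>j<N. a i j * a j t) = (if i = t then k - d else 0) + (e - d) * a i t + d"
  using assms unfolding srg_matrix_def by blast+

definition complex_mat_of :: "nat \<Rightarrow> (nat \<Rightarrow> nat \<Rightarrow> real) \<Rightarrow> complex mat" where
  "complex_mat_of N a = mat N N (\<lambda>(i,j). complex_of_real (a i j))"

lemma complex_mat_of_carrier [simp]: "complex_mat_of N a \<in> carrier_mat N N"
  by (simp add: complex_mat_of_def)

lemma srg_matrix_degree_equation:
  assumes srg: "srg_matrix N a k e d" and "0 < N"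
  shows "k * (k - e - 1) = d * (N - k - 1)"
proof -
  have "k * k = (\<Sum>j<N. a 0 j * (\<Sum>t<N. a j t))"
    using srg assms(2) by (simp add: srg_matrix_row_sum sum_distrib_right[symmetric])
  also have "\<dots> = (\<Sum>t<N. \<Sum>j<N. a 0 j * a j t)"
    by (subst sum.swap) (simp add: sum_distrib_left)
  also have "\<dots> = (\<Sum>t<N. (if 0 = t then k - d else 0) + (e - d) * a 0 t + d)"
    using srg assms(2) by (simp add: srg_matrix_square)
  also have "\<dots> = (k - d) + (e - d) * k + d * N"
    using srg assms(2) by (simp add: sum.distrib sum_distrib_left[symmetric] srg_matrix_row_sum)
  finally show ?thesis
    by (simp add: algebra_simps)
qed

lemma srg_matrix_trace:
  assumes srg: "srg_matrix N a k e d"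
  shows "mat_trace (complex_mat_of N a) = 0"
    and "mat_trace (complex_mat_of N a * complex_mat_of N a) = of_real (N * k)"
proof -
  show "mat_trace (complex_mat_of N a) = 0"
    using srg by (simp add: mat_trace_def complex_mat_of_def srg_matrix_diag)
  have "mat_trace (complex_mat_of N a * complex_mat_of N a)
      = (\<Sum>i<N. complex_of_real (\<Sum>j<N. a i j * a j i))"
    by (simp add: mat_trace_def complex_mat_of_def scalar_prod_def atLeast0LessThan)
  also have "\<dots> = (\<Sum>i<N. complex_of_real k)"
    using srg by (intro sum.cong refl) (simp add: srg_matrix_square srg_matrix_diag)
  finally show "mat_trace (complex_mat_of N a * complex_mat_of N a) = of_real (N * k)"
    by simp
qed

lemma complex_mat_of_eigenvector_nth:
  assumes "v \<in> carrier_vec N" "complex_mat_of N a *\<^sub>v v = x \<cdot>\<^sub>v v" "i < N"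
  shows "(\<Sum>j<N. complex_of_real (a i j) * v $ j) = x * v $ i"
proof -
  have "(complex_mat_of N a *\<^sub>v v) $ i = (x \<cdot>\<^sub>v v) $ i"
    using assms(2) by simp
  then show ?thesis
    using assms(1,3) by (simp add: complex_mat_of_def scalar_prod_def atLeast0LessThan)
qed

lemma srg_matrix_eigenvector_sum:
  assumes srg: "srg_matrix N a k e d" and v: "v \<in> carrier_vec N"
    and Av: "complex_mat_of N a *\<^sub>v v = x \<cdot>\<^sub>v v"
  shows "x * (\<Sum>j<N. v $ j) = of_real k * (\<Sum>j<N. v $ j)"
proof -
  have "x * (\<Sum>j<N. v $ j) = (\<Sum>i<N. \<Sum>j<N. complex_of_real (a i j) * v $ j)"
    by (simp add: sum_distrib_left complex_mat_of_eigenvector_nth[OF v Av])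
  also have "\<dots> = (\<Sum>j<N. of_real (\<Sum>i<N. a j i) * v $ j)"
    using srg by (subst sum.swap) (simp add: sum_distrib_right srg_matrix_sym)
  also have "\<dots> = of_real k * (\<Sum>j<N. v $ j)"
    using srg by (simp add: sum_distrib_left srg_matrix_row_sum)
  finally show ?thesis .
qed

lemma srg_matrix_eigenvector_square:
  assumes srg: "srg_matrix N a k e d" and v: "v \<in> carrier_vec N"
    and Av: "complex_mat_of N a *\<^sub>v v = x \<cdot>\<^sub>v v" and i: "i < N"
  shows "x^2 * v $ i
    = of_real (k - d) * v $ i + of_real (e - d) * (x * v $ i) + of_real d * (\<Sum>j<N. v $ j)"
proof -
  let ?c = "\<lambda>i j. complex_of_real (a i j)"
  note row = complex_mat_of_eigenvector_nth[OF v Av]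
  have "x^2 * v $ i = (\<Sum>j<N. ?c i j * (x * v $ j))"
    using row[OF i] by (simp add: power2_eq_square sum_distrib_left algebra_simps flip: row[OF i])
  also have "\<dots> = (\<Sum>j<N. ?c i j * (\<Sum>t<N. ?c j t * v $ t))"
    by (simp add: row)
  also have "\<dots> = (\<Sum>t<N. \<Sum>j<N. ?c i j * ?c j t * v $ t)"
    by (subst sum.swap) (simp add: sum_distrib_left algebra_simps)
  also have "\<dots> = (\<Sum>t<N. of_real (\<Sum>j<N. a i j * a j t) * v $ t)"
    by (simp add: sum_distrib_right)
  also have "\<dots> = (\<Sum>t<N. of_real ((if i = t then k - d else 0) + (e - d) * a i t + d) * v $ t)"
    by (intro sum.cong refl) (simp only: srg_matrix_square[OF srg i] lessThan_iff)
  also have "\<dots> = (\<Sum>t<N. (if i = t then of_real (k - d) * v $ t else 0)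
      + of_real (e - d) * (?c i t * v $ t) + of_real d * v $ t)"
    by (intro sum.cong refl) (auto simp: algebra_simps)
  also have "\<dots> = of_real (k - d) * v $ i + of_real (e - d) * (x * v $ i) + of_real d * (\<Sum>j<N. v $ j)"
    using i by (simp add: sum.distrib sum_distrib_left[symmetric] row)
  finally show ?thesis .
qed

lemma srg_matrix_eigenvalue:
  assumes srg: "srg_matrix N a k e d" and "eigenvalue (complex_mat_of N a) x"
  shows "x = of_real k \<or> x^2 - of_real (e - d) * x - of_real (k - d) = 0"
proof (cases "x = of_real k")
  case False
  from assms(2) obtain v where "eigenvector (complex_mat_of N a) v x"
    unfolding eigenvalue_def by blast
  then have v: "v \<in> carrier_vec N" and "v \<noteq> 0\<^sub>v N" and Av: "complex_mat_of N a *\<^sub>v v = x \<cdot>\<^sub>v v"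
    unfolding eigenvector_def by (auto simp: complex_mat_of_def)
  then obtain i where i: "i < N" and "v $ i \<noteq> 0"
    by (auto simp: vec_eq_iff)
  have "(\<Sum>j<N. v $ j) = 0"
    using srg_matrix_eigenvector_sum[OF srg v Av] False by simp
  then have "(x^2 - of_real (e - d) * x - of_real (k - d)) * v $ i = 0"
    using srg_matrix_eigenvector_square[OF srg v Av i] by (simp add: algebra_simps)
  with \<open>v $ i \<noteq> 0\<close> show ?thesis
    by simp
qed simp

lemma srg_matrix_proots_subset:
  assumes srg: "srg_matrix N a k e d" and "r + s = e - d" "r * s = d - k"
  shows "set_mset (proots (char_poly (complex_mat_of N a)))
    \<subseteq> {complex_of_real k, complex_of_real r, complex_of_real s}"
proof
  fix x assume "x \<in># proots (char_poly (complex_mat_of N a))"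
  then have "x = of_real k \<or> x^2 - of_real (e - d) * x - of_real (k - d) = 0"
    by (intro srg_matrix_eigenvalue[OF srg] proots_char_poly_eigenvalue[OF complex_mat_of_carrier])
  moreover have "(x - of_real r) * (x - of_real s) = x^2 - of_real (r + s) * x + of_real (r * s)"
    by (simp add: algebra_simps power2_eq_square)
  then have "x^2 - of_real (e - d) * x - of_real (k - d) = (x - of_real r) * (x - of_real s)"
    using assms(2,3) by (simp add: algebra_simps)
  ultimately show "x \<in> {complex_of_real k, complex_of_real r, complex_of_real s}"
    by auto
qed

lemma srg_matrix_proots_power_sums:
  assumes "srg_matrix N a k e d"
  shows "(\<Sum>x\<in>#proots (char_poly (complex_mat_of N a)). x) = 0"
    and "(\<Sum>x\<in>#proots (char_poly (complex_mat_of N a)). x^2) = of_real (N * k)"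
  using sum_proots_char_poly[OF complex_mat_of_carrier] srg_matrix_trace[OF assms] by simp_all

lemma srg_matrix_degree_minus_eigenvalues:
  assumes srg: "srg_matrix N a k e d" and "0 < N" and rs: "r + s = e - d" "r * s = d - k"
  shows "(k - r) * (k - s) = d * N"
proof -
  have "(k - r) * (k - s) = k * k - k * (r + s) + r * s"
    by (simp add: algebra_simps)
  also have "\<dots> = k * (k - e - 1) + d * k + d"
    unfolding rs by (simp add: algebra_simps)
  also have "\<dots> = d * N"
    unfolding srg_matrix_degree_equation[OF srg \<open>0 < N\<close>] by (simp add: algebra_simps)
  finally show ?thesis .
qed

text \<open>The multiplicity of \<open>k\<close> is pinned down by the first two power sums of the spectrum:
  it is the trace of \<open>(A - r I)(A - s I)\<close> divided by \<open>(k - r)(k - s) = d N\<close>.\<close>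

lemma srg_matrix_spectrum:
  assumes srg: "srg_matrix N a k e d" and "0 < N" "0 < d" "d < k"
    and rs: "r + s = e - d" "r * s = d - k"
  obtains f g where "proots (char_poly (complex_mat_of N a))
      = {#of_real k#} + replicate_mset f (of_real r) + replicate_mset g (of_real s)"
    "real f + real g = real N - 1" "k + real f * r + real g * s = 0"
proof -
  let ?M = "proots (char_poly (complex_mat_of N a))"
  define c where "c = count ?M (of_real k)"
  define f where "f = count ?M (of_real r)"
  define g where "g = count ?M (of_real s)"
  have kr_ks: "(k - r) * (k - s) = d * N"
    by (rule srg_matrix_degree_minus_eigenvalues[OF srg \<open>0 < N\<close> rs])
  then have "k \<noteq> r" "k \<noteq> s"
    using \<open>0 < N\<close> \<open>0 < d\<close> by auto
  moreover have "r \<noteq> s"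
  proof
    assume "r = s"
    then have "s * s < 0"
      using rs \<open>d < k\<close> by simp
    then show False
      by simp
  qed
  ultimately have M: "?M = replicate_mset c (of_real k) + replicate_mset f (of_real r)
      + replicate_mset g (of_real s)"
    unfolding c_def f_def g_def
    by (intro mset_eq_replicate_count3 srg_matrix_proots_subset[OF srg rs]) auto
  have "size ?M = N"
    using degree_monic_char_poly[OF complex_mat_of_carrier] by (simp add: size_proots_complex)
  then have count: "real c + real f + real g = N"
    by (simp add: M flip: of_nat_add)
  have "complex_of_real (c * k + f * r + g * s) = (\<Sum>x\<in>#?M. x)"
    by (simp add: M)
  also have "\<dots> = 0"
    by (rule srg_matrix_proots_power_sums(1)[OF srg])
  finally have sum1: "c * k + f * r + g * s = 0"
    by (simp only: of_real_eq_0_iff)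
  have "complex_of_real (c * k^2 + f * r^2 + g * s^2) = (\<Sum>x\<in>#?M. x^2)"
    by (simp add: M)
  also have "\<dots> = of_real (N * k)"
    by (rule srg_matrix_proots_power_sums(2)[OF srg])
  finally have sum2: "c * k^2 + f * r^2 + g * s^2 = N * k"
    by (simp only: of_real_eq_iff)
  have "c * ((k - r) * (k - s)) = (c * k^2 + f * r^2 + g * s^2)
      - (r + s) * (c * k + f * r + g * s) + r * s * (c + f + g)"
    by (simp add: algebra_simps power2_eq_square)
  also have "\<dots> = N * k + r * s * N"
    using sum1 sum2 count by simp
  also have "\<dots> = 1 * ((k - r) * (k - s))"
    unfolding rs(2) kr_ks by (simp add: algebra_simps)
  finally have "c = 1"
    using kr_ks \<open>0 < N\<close> \<open>0 < d\<close> by simp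
  show thesis
    using M count sum1 \<open>c = 1\<close> by (intro that[of f g]) auto
qed

definition complement_fun :: "(nat \<Rightarrow> nat \<Rightarrow> real) \<Rightarrow> nat \<Rightarrow> nat \<Rightarrow> real" where
  "complement_fun a i j = 1 - a i j - (if i = j then 1 else 0)"

lemma srg_matrix_complement:
  assumes srg: "srg_matrix N a k e d"
  shows "srg_matrix N (complement_fun a) (N - k - 1) (N - 2*k + d - 2) (N - 2*k + e)"
proof -
  have col: "(\<Sum>j<N. a j i) = k" if "i < N" for i
  proof -
    have "(\<Sum>j<N. a j i) = (\<Sum>j<N. a i j)"
      using srg that by (intro sum.cong refl) (simp add: srg_matrix_sym)
    then show ?thesis
      using srg that by (simp add: srg_matrix_row_sum)
  qed
  have row: "(\<Sum>j<N. complement_fun a i j) = N - k - 1" if "i < N" for i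
    using srg that by (simp add: complement_fun_def sum_subtractf srg_matrix_row_sum)
  have square: "(\<Sum>j<N. complement_fun a i j * complement_fun a j t)
      = (if i = t then (N - k - 1) - (N - 2*k + e) else 0)
        + ((N - 2*k + d - 2) - (N - 2*k + e)) * complement_fun a i t + (N - 2*k + e)"
    if i: "i < N" and t: "t < N" for i t
  proof -
    have "(\<Sum>j<N. complement_fun a i j * complement_fun a j t) = (\<Sum>j<N. 1 - a j t
        - (if j = t then 1 else 0) - a i j + a i j * a j t + (if j = t then a i j else 0)
        - (if i = j then 1 else 0) + (if i = j then a j t else 0)
        + (if j = t then (if i = t then 1 else 0) else 0))"
      by (intro sum.cong refl) (auto simp: complement_fun_def algebra_simps)
    also have "\<dots> = N - k - 1 - k + (\<Sum>j<N. a i j * a j t) + a i t - 1 + a i t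
        + (if i = t then 1 else 0)"
      using i t srg col by (simp add: sum.distrib sum_subtractf srg_matrix_row_sum)
    also have "\<dots> = (if i = t then (N - k - 1) - (N - 2*k + e) else 0)
        + ((N - 2*k + d - 2) - (N - 2*k + e)) * complement_fun a i t + (N - 2*k + e)"
      unfolding srg_matrix_square[OF srg i t] complement_fun_def
      using srg i by (cases "i = t") (auto simp: srg_matrix_diag algebra_simps)
    finally show ?thesis .
  qed
  show ?thesis
    using srg row square by (auto simp: srg_matrix_def complement_fun_def)
qed

lemma srg_matrix_params_ge_1_if_path:
  assumes srg: "srg_matrix N a k e d" and zero_one: "\<forall>i<N. \<forall>j<N. a i j = 0 \<or> a i j = 1"
    and "i < N" "j < N" "t < N" "i \<noteq> j" "a i j = 0" "a i t = 1" "a t j = 1"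
  shows "1 \<le> d \<and> 1 \<le> k"
proof -
  have nonneg: "0 \<le> a x y" if "x < N" "y < N" for x y
    using zero_one that by (metis order.refl zero_le_one)
  have "a i t * a t j \<le> (\<Sum>u<N. a i u * a u j)"
    using assms nonneg by (intro member_le_sum) auto
  moreover have "a i t \<le> (\<Sum>u<N. a i u)"
    using assms nonneg by (intro member_le_sum) auto
  ultimately show ?thesis
    using assms by (simp add: srg_matrix_square srg_matrix_row_sum)
qed

section \<open>Arithmetic of the spectrum\<close>

lemma Rats_root_of_monic_int_quadratic_in_Ints:
  fixes x :: real and b c :: int
  assumes "x \<in> \<rat>" "x^2 = of_int b * x + of_int c"
  shows "x \<in> \<int>"
proof -
  from Rats_cases'[OF assms(1)] obtain p q :: int where q: "q > 0" and cop: "coprime p q"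
    and x: "x = of_int p / of_int q" by blast
  have "real_of_int (p * p) = of_int (b * p * q + c * (q * q))"
    using assms(2) q unfolding x by (simp add: field_simps power2_eq_square)
  then have "p * p = b * p * q + c * (q * q)"
    by (simp only: of_int_eq_iff)
  then have "q dvd p * p"
    by (metis dvd_add dvd_mult dvd_mult2 dvd_refl mult.commute)
  with cop have "is_unit q"
    by (metis coprime_common_divisor coprime_commute coprime_mult_right_iff dvd_refl)
  then show ?thesis
    using q x by simp
qed

lemma srg_nontrivial_eigenvalues:
  fixes k e d :: real
  assumes "d < k" "e + 1 < k"
  obtains r s where "r + s = e - d" "r * s = d - k" "0 < r" "s < -1"
proof -
  define D where "D = (e - d)^2 + 4 * (k - d)"
  define r where "r = ((e - d) + sqrt D) / 2"
  define s where "s = ((e - d) - sqrt D) / 2"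
  have "0 < D"
    unfolding D_def using assms(1) by (simp add: add_nonneg_pos)
  have sum: "r + s = e - d"
    unfolding r_def s_def by (simp add: field_simps)
  have "r * s = ((e - d)^2 - (sqrt D)^2) / 4"
    unfolding r_def s_def by (simp add: field_simps power2_eq_square)
  also have "\<dots> = d - k"
    using \<open>0 < D\<close> unfolding D_def by simp
  finally have prod: "r * s = d - k" .
  have "s < r"
    unfolding r_def s_def using \<open>0 < D\<close> by simp
  moreover have "r * s < 0"
    using prod assms(1) by simp
  ultimately have "s < 0" "0 < r"
    by (auto simp: mult_less_0_iff)
  moreover have "(r + 1) * (s + 1) < 0"
    using sum prod assms(2) by (simp add: algebra_simps)
  ultimately have "s < -1"
    by (simp add: mult_less_0_iff)
  with sum prod \<open>0 < r\<close> show thesis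
    by (rule that)
qed

text \<open>Only the arithmetic consequences of the spectrum are recorded here: \<open>r\<close> and \<open>s\<close> are the
  eigenvalues other than \<open>k\<close>, of multiplicities \<open>f\<close> and \<open>g\<close>.\<close>

locale srg_eigendata =
  fixes N k e d :: nat and r s :: real and f g :: nat
  assumes degree_eq: "real k * (real k - real e - 1) = real d * (real N - real k - 1)"
    and eigenvalue_sum: "r + s = real e - real d"
    and eigenvalue_prod: "r * s = real d - real k"
    and multiplicity_sum: "f + g + 1 = N"
    and trace_eq_0: "real k + real f * r + real g * s = 0"
    and r_pos: "0 < r"
    and s_less: "s < -1"
begin

lemma multiplicity_sum_real: "real f + real g = real N - 1"
  unfolding multiplicity_sum[symmetric] by simp

lemma weighted_eigenvalue_sum: "real f * r + real g * s = - real k"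
  using trace_eq_0 by simp

lemma s_less_r: "s < r"
  using r_pos s_less by simp

lemma d_less_k: "d < k"
proof -
  have "r * s < 0"
    using r_pos s_less by (simp add: mult_pos_neg)
  then show ?thesis
    using eigenvalue_prod by simp
qed

lemma r_square: "r^2 = (real e - real d) * r + (real k - real d)"
proof -
  have "r^2 = (r + s) * r - r * s"
    by (simp add: algebra_simps power2_eq_square)
  then show ?thesis
    using eigenvalue_sum eigenvalue_prod by simp
qed

lemma degree_plus_1_less: "real k + 1 < real N"
proof -
  have "real k - real e - 1 = - ((r + 1) * (s + 1))"
    using eigenvalue_sum eigenvalue_prod by (simp add: algebra_simps)
  moreover have "(r + 1) * (s + 1) < 0"
    using r_pos s_less by (simp add: mult_pos_neg)
  ultimately have "0 < real k - real e - 1"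
    by simp
  moreover have "0 < real k"
    using d_less_k by simp
  ultimately have "0 < real k * (real k - real e - 1)"
    by simp
  then show ?thesis
    using degree_eq by (simp add: zero_less_mult_iff)
qed

text \<open>The two sides are the energies of the graph and of its complement.\<close>

lemma energy_balance_iff:
  "\<bar>real k\<bar> + real f * \<bar>r\<bar> + real g * \<bar>s\<bar>
     = \<bar>real N - real k - 1\<bar> + real g * \<bar>-1 - s\<bar> + real f * \<bar>-1 - r\<bar> \<longleftrightarrow> f = k"
  (is "?energy = ?energy_compl \<longleftrightarrow> _")
proof -
  have "?energy - ?energy_compl
      = real k + real f * r - real g * s - ((real N - real k - 1) + real g * (-1 - s) + real f * (1 + r))"
    using r_pos s_less degree_plus_1_less by simp
  also have "\<dots> = 2 * (real k - real f)"
    using multiplicity_sum_real by (simp add: algebra_simps)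
  finally have "?energy = ?energy_compl \<longleftrightarrow> real f = real k"
    by argo
  then show ?thesis
    by simp
qed

lemma mult_eq_degree_iff: "f = k \<longleftrightarrow> real k * (r + 1) + (real N - 1 - real k) * s = 0"
proof -
  have "real f * (r - s) = (real f * r + real g * s) - (real f + real g) * s"
    by (simp add: algebra_simps)
  also have "\<dots> = - real k - (real N - 1) * s"
    by (simp only: weighted_eigenvalue_sum multiplicity_sum_real)
  finally have f: "real f * (r - s) = - real k - (real N - 1) * s" .
  have "f = k \<longleftrightarrow> real f * (r - s) = real k * (r - s)"
    using s_less_r by simp
  also have "\<dots> \<longleftrightarrow> real k * (r + 1) + (real N - 1 - real k) * s = 0"
    unfolding f by (auto simp: algebra_simps)
  finally show ?thesis .
qed

lemma conference_params_if_mults_eq_degree: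
  assumes "f = k" "g = k"
  shows "N = 4*d + 1 \<and> k = 2*d \<and> e + 1 = d"
proof -
  have N: "real N = 2 * real k + 1"
    using multiplicity_sum_real assms by simp
  have "real k * (r + s + 1) = 0"
    using trace_eq_0 assms by (simp add: algebra_simps)
  then have "r + s = -1"
    using d_less_k by simp
  then have ed: "real e + 1 = real d"
    using eigenvalue_sum by simp
  have "real k * (real k - real e - 1) = real d * (real N - real k - 1)"
    by (rule degree_eq)
  also have "\<dots> = real k * real d"
    unfolding N by simp
  finally have "real k - real e - 1 = real d"
    using d_less_k by simp
  then have "real k = 2 * real d"
    using ed by simp
  then have "real N = real (4*d + 1)" "real k = real (2*d)" "real (e + 1) = real d"
    using N ed by simp_all
  then show ?thesis
    by (simp only: of_nat_eq_iff)
qed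

text \<open>With \<open>n = r - s\<close> and \<open>m = -s\<close> these are the \<open>OA(n,m)\<close> parameters.\<close>

lemma params_in_eigenvalues_if_mult_eq_degree:
  assumes "f = k"
  shows "real d = - s * (- s - 1)" and "real k = - s * (r - s - 1)"
    and "real e = (- s)^2 - 3 * (- s) + (r - s)" and "real N = (r - s)^2"
proof -
  have "real k * (r + 1) + (real N - 1 - real k) * s = 0"
    using mult_eq_degree_iff assms by blast
  then have compl_deg: "(real N - 1 - real k) * s = - real k * (r + 1)"
    by (simp add: algebra_simps)
  have k_e: "real k - real e - 1 = - ((r + 1) * (s + 1))"
    using eigenvalue_sum eigenvalue_prod by (simp add: algebra_simps)
  have "real k * (r + 1) * real d = - (real d * ((real N - 1 - real k) * s))"
    unfolding compl_deg by (simp add: algebra_simps)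
  also have "\<dots> = - (real d * (real N - real k - 1)) * s"
    by (simp add: algebra_simps)
  also have "\<dots> = - (real k * (real k - real e - 1)) * s"
    by (simp only: degree_eq)
  also have "\<dots> = real k * (r + 1) * (s * (s + 1))"
    unfolding k_e by (simp add: algebra_simps)
  finally have "real k * (r + 1) * real d = real k * (r + 1) * (s * (s + 1))" .
  then have d: "real d = s * (s + 1)"
    using d_less_k r_pos by auto
  then show "real d = - s * (- s - 1)"
    by (simp add: algebra_simps)
  have k: "real k = s * (s + 1) - r * s"
    using eigenvalue_prod d by simp
  then show "real k = - s * (r - s - 1)"
    by (simp add: algebra_simps)
  show "real e = (- s)^2 - 3 * (- s) + (r - s)"
    using eigenvalue_sum d by (simp add: algebra_simps power2_eq_square)
  have "(real N - 1 - real k) * (- s) = real k * (r + 1)"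
    using compl_deg by (simp add: algebra_simps)
  also have "\<dots> = (r - s - 1) * (r + 1) * (- s)"
    unfolding k by (simp add: algebra_simps)
  finally have "real N - 1 - real k = (r - s - 1) * (r + 1)"
    using s_less by simp
  then show "real N = (r - s)^2"
    using k by (simp add: algebra_simps power2_eq_square)
qed

lemma eigenvalues_Ints_if_mults_ne:
  assumes "f \<noteq> g"
  shows "r \<in> \<int>" and "s \<in> \<int>"
proof -
  have "(real f - real g) * (r - s) = 2 * (real f * r + real g * s) - (real f + real g) * (r + s)"
    by (simp add: algebra_simps)
  also have "\<dots> = - 2 * real k - (real N - 1) * (real e - real d)"
    by (simp only: weighted_eigenvalue_sum multiplicity_sum_real eigenvalue_sum)
  finally have "r - s = (- 2 * real k - (real N - 1) * (real e - real d)) / (real f - real g)"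
    using assms by (simp add: field_simps)
  then have "r - s \<in> \<rat>"
    by simp
  have "r = ((real e - real d) + (r - s)) / 2"
    using eigenvalue_sum by simp
  also have "\<dots> \<in> \<rat>"
    using \<open>r - s \<in> \<rat>\<close> by (intro Rats_divide Rats_add[OF Rats_diff]) simp_all
  finally have "r \<in> \<rat>" .
  moreover have "r^2 = of_int (int e - int d) * r + of_int (int k - int d)"
    using r_square by simp
  ultimately show "r \<in> \<int>"
    by (rule Rats_root_of_monic_int_quadratic_in_Ints)
  moreover have "s = of_int (int e - int d) - r"
    using eigenvalue_sum by simp
  ultimately show "s \<in> \<int>"
    by simp
qed

lemma OA_params_if_mult_eq_degree:
  assumes "f = k" "f \<noteq> g"
  shows "\<exists>n m. 0 < m \<and> m < n \<and> N = n^2 \<and> k = m*(n-1)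
    \<and> int e = int m^2 - 3*int m + int n \<and> d = m*(m-1)"
proof -
  obtain ri si :: int where ri: "r = of_int ri" and si: "s = of_int si"
    using eigenvalues_Ints_if_mults_ne[OF assms(2)] by (auto elim!: Ints_cases)
  define m where "m = nat (- si)"
  define n where "n = nat (ri - si)"
  have m: "real m = - s" and n: "real n = r - s"
    unfolding m_def n_def ri si using r_pos s_less ri si by simp_all
  have "0 < m" "m < n"
    using m n r_pos s_less by simp_all
  have "real N = real (n^2)"
    using params_in_eigenvalues_if_mult_eq_degree(4)[OF assms(1)] n by simp
  moreover have "real k = real (m*(n-1))"
    using params_in_eigenvalues_if_mult_eq_degree(2)[OF assms(1)] m n \<open>m < n\<close> by (simp add: of_nat_diff)
  moreover have "real d = real (m*(m-1))"
    using params_in_eigenvalues_if_mult_eq_degree(1)[OF assms(1)] m \<open>0 < m\<close> by (simp add: of_nat_diff)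
  moreover have "real_of_int (int e) = of_int (int m^2 - 3*int m + int n)"
    using params_in_eigenvalues_if_mult_eq_degree(3)[OF assms(1)] m n by simp
  ultimately show ?thesis
    using \<open>0 < m\<close> \<open>m < n\<close> by (intro exI[of _ n] exI[of _ m]) (simp only: of_nat_eq_iff of_int_eq_iff)
qed

lemma mult_eq_degree_if_conference:
  assumes "N = 4*d + 1" "k = 2*d" "e + 1 = d"
  shows "f = k"
proof -
  have "r + s + 1 = 0"
    using eigenvalue_sum assms(3)[symmetric] by simp
  moreover have "real k * (r + 1) + (real N - 1 - real k) * s = real k * (r + s + 1)"
    using assms(1,2) by (simp add: algebra_simps)
  ultimately show ?thesis
    using mult_eq_degree_iff by simp
qed

lemma mult_eq_degree_if_OA:
  assumes "0 < n" "0 < m" "N = n^2" "k = m*(n-1)"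
    and "int e = int m^2 - 3*int m + int n" "d = m*(m-1)"
  shows "f = k"
proof -
  have "real_of_int (int e) = of_int (int m^2 - 3*int m + int n)"
    using assms(5) by simp
  then have e: "real e = real m ^ 2 - 3 * real m + real n"
    by simp
  have k: "real k = real m * (real n - 1)" and d: "real d = real m * (real m - 1)"
    using assms by (simp_all add: of_nat_diff)
  have "(r - (real n - real m)) * (r + real m) = r^2 - (real n - 2 * real m) * r - real m * (real n - real m)"
    by (simp add: algebra_simps power2_eq_square)
  also have "\<dots> = 0"
    using r_square unfolding e k d by (simp add: algebra_simps power2_eq_square)
  finally have r: "r = real n - real m"
    using r_pos by simp
  have s: "s = - real m"
    using eigenvalue_sum unfolding r e d by (simp add: algebra_simps power2_eq_square)
  have "real k * (r + 1) + (real N - 1 - real k) * s = 0"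
    unfolding k r s assms(3) by (simp add: algebra_simps power2_eq_square)
  then show ?thesis
    using mult_eq_degree_iff by simp
qed

lemma mult_eq_degree_iff_params:
  "f = k \<longleftrightarrow> (N = 4*d + 1 \<and> k = 2*d \<and> e + 1 = d) \<or>
     (\<exists>n m. 0 < n \<and> 0 < m \<and> m \<notin> {n, n+1} \<and> N = n^2 \<and> k = m*(n-1)
        \<and> int e = int m^2 - 3*int m + int n \<and> d = m*(m-1))"
proof
  assume "f = k"
  show "(N = 4*d + 1 \<and> k = 2*d \<and> e + 1 = d) \<or>
     (\<exists>n m. 0 < n \<and> 0 < m \<and> m \<notin> {n, n+1} \<and> N = n^2 \<and> k = m*(n-1)
        \<and> int e = int m^2 - 3*int m + int n \<and> d = m*(m-1))"
  proof (cases "f = g")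
    case True
    then have "g = k"
      using \<open>f = k\<close> by simp
    then show ?thesis
      using conference_params_if_mults_eq_degree[OF \<open>f = k\<close>] by blast
  next
    case False
    then obtain n m where "0 < m" "m < n" "N = n^2" "k = m*(n-1)"
      "int e = int m^2 - 3*int m + int n" "d = m*(m-1)"
      using OA_params_if_mult_eq_degree \<open>f = k\<close> by blast
    then show ?thesis
      by (intro disjI2 exI[of _ n] exI[of _ m]) auto
  qed
next
  assume "(N = 4*d + 1 \<and> k = 2*d \<and> e + 1 = d) \<or>
     (\<exists>n m. 0 < n \<and> 0 < m \<and> m \<notin> {n, n+1} \<and> N = n^2 \<and> k = m*(n-1)
        \<and> int e = int m^2 - 3*int m + int n \<and> d = m*(m-1))"
  then show "f = k"
    using mult_eq_degree_if_conference mult_eq_degree_if_OA by blast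
qed

end

lemma srg_matrix_eigendata:
  fixes N k e d :: nat
  assumes srg: "srg_matrix N a k e d" and "0 < d" "d < k" "2*k < N + e" "e + 1 < k"
  obtains r s f g where "srg_eigendata N k e d r s f g"
    "proots (char_poly (complex_mat_of N a))
      = {#of_real k#} + replicate_mset f (of_real r) + replicate_mset g (of_real s)"
    "proots (char_poly (complex_mat_of N (complement_fun a)))
      = {#of_real (real N - real k - 1)#} + replicate_mset g (of_real (-1 - s))
        + replicate_mset f (of_real (-1 - r))"
proof -
  have "0 < N"
    using assms by linarith
  obtain r s where rs: "r + s = real e - real d" "r * s = real d - real k" and "0 < r" "s < -1"
    using srg_nontrivial_eigenvalues[of d k e] assms by auto
  obtain f g where spec: "proots (char_poly (complex_mat_of N a))
      = {#of_real k#} + replicate_mset f (of_real r) + replicate_mset g (of_real s)"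
    and fg: "real f + real g = real N - 1" and trace: "real k + real f * r + real g * s = 0"
    using srg_matrix_spectrum[OF srg \<open>0 < N\<close> _ _ rs] assms by auto
  have compl_rs: "(-1 - s) + (-1 - r) = (real N - 2 * real k + real d - 2) - (real N - 2 * real k + real e)"
    "(-1 - s) * (-1 - r) = (real N - 2 * real k + real e) - (real N - real k - 1)"
    using rs by (simp_all add: algebra_simps)
  obtain g' f' where spec_compl: "proots (char_poly (complex_mat_of N (complement_fun a)))
      = {#of_real (real N - real k - 1)#} + replicate_mset g' (of_real (-1 - s))
        + replicate_mset f' (of_real (-1 - r))"
    and fg': "real g' + real f' = real N - 1"
    and trace': "(real N - real k - 1) + real g' * (-1 - s) + real f' * (-1 - r) = 0"
    using srg_matrix_spectrum[OF srg_matrix_complement[OF srg] \<open>0 < N\<close> _ _ compl_rs] assms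
    by auto
  have f': "real f' = real f + real g - real g'"
    using fg fg' by linarith
  have "real g' * s + real f' * r = - real k"
    using trace' fg' by (simp add: algebra_simps)
  then have "(real g' - real g) * (s - r) = 0"
    using trace by (simp add: f' algebra_simps)
  then have "g' = g"
    using \<open>0 < r\<close> \<open>s < -1\<close> by simp
  then have "f' = f"
    using fg fg' by simp
  have "real (f + g + 1) = real N"
    using fg by simp
  then have data: "srg_eigendata N k e d r s f g"
    using srg_matrix_degree_equation[OF srg \<open>0 < N\<close>] rs trace \<open>0 < r\<close> \<open>s < -1\<close>
    by unfold_locales (simp_all only: of_nat_eq_iff)
  show thesis
    using that[OF data spec] spec_compl \<open>g' = g\<close> \<open>f' = f\<close> by blast
qed

section \<open>Strongly regular graphs\<close>

definition adj_fun :: "(nat \<Rightarrow> nat \<Rightarrow> bool) \<Rightarrow> nat \<Rightarrow> nat \<Rightarrow> real" where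
  "adj_fun E i j = (if E i j then 1 else 0)"

lemma complex_mat_of_adj_fun: "complex_mat_of N (adj_fun E) = adj_matrix N E"
  by (rule eq_matI) (auto simp: complex_mat_of_def adj_matrix_def adj_fun_def)

lemma complement_adj_fun:
  assumes "simple_graph N E" "i < N"
  shows "complement_fun (adj_fun E) i j = adj_fun (compl_graph E) i j"
  using assms by (auto simp: complement_fun_def adj_fun_def compl_graph_def simple_graph_def)

lemma complex_mat_of_complement_adj_fun:
  assumes "simple_graph N E"
  shows "complex_mat_of N (complement_fun (adj_fun E)) = adj_matrix N (compl_graph E)"
  by (rule eq_matI)
    (auto simp: complex_mat_of_def adj_matrix_def complement_adj_fun[OF assms] adj_fun_def)

lemma sum_indicator_lessThan:
  fixes N :: nat
  shows "(\<Sum>j<N. if P j then (1::real) else 0) = card {j. j < N \<and> P j}"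
proof -
  have "{..<N} \<inter> {j. P j} = {j. j < N \<and> P j}"
    by auto
  then show ?thesis
    by (simp add: sum.If_cases)
qed

lemma strongly_regular_srg_matrix:
  assumes srg: "strongly_regular N E N k e d"
  shows "srg_matrix N (adj_fun E) k e d"
proof -
  have simple: "simple_graph N E" and deg: "\<forall>i<N. card (neighbours N E i) = k"
    and adjacent: "\<forall>i<N. \<forall>j<N. E i j \<longrightarrow> card (neighbours N E i \<inter> neighbours N E j) = e"
    and nonadjacent: "\<forall>i<N. \<forall>j<N. i \<noteq> j \<and> \<not> E i j \<longrightarrow> card (neighbours N E i \<inter> neighbours N E j) = d"
    using srg unfolding strongly_regular_def by auto
  have sym: "E i j = E j i" if "i < N" "j < N" for i j
    using simple that unfolding simple_graph_def by auto
  have irrefl: "\<not> E i i" if "i < N" for i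
    using simple that unfolding simple_graph_def by auto
  have row: "(\<Sum>j<N. adj_fun E i j) = k" if "i < N" for i
    using deg that by (simp add: adj_fun_def sum_indicator_lessThan neighbours_def)
  have square: "(\<Sum>j<N. adj_fun E i j * adj_fun E j t)
      = (if i = t then real k - real d else 0) + (real e - real d) * adj_fun E i t + real d"
    if i: "i < N" and t: "t < N" for i t
  proof -
    have "(\<Sum>j<N. adj_fun E i j * adj_fun E j t) = (\<Sum>j<N. if E i j \<and> E j t then 1 else 0)"
      by (intro sum.cong refl) (simp add: adj_fun_def)
    also have "\<dots> = card {j. j < N \<and> E i j \<and> E j t}"
      by (rule sum_indicator_lessThan)
    also have "{j. j < N \<and> E i j \<and> E j t} = neighbours N E i \<inter> neighbours N E t"
      using sym t by (auto simp: neighbours_def)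
    finally have common: "(\<Sum>j<N. adj_fun E i j * adj_fun E j t)
        = card (neighbours N E i \<inter> neighbours N E t)" .
    show ?thesis
      using common deg adjacent nonadjacent irrefl i t by (cases "i = t"; cases "E i t") (auto simp: adj_fun_def)
  qed
  show ?thesis
    unfolding srg_matrix_def using sym irrefl row square by (auto simp: adj_fun_def)
qed

lemma strongly_regular_params_unique:
  assumes "strongly_regular N E n k e d" "strongly_regular N E n' k' e' d'"
  shows "n = n' \<and> k = k' \<and> e = e' \<and> d = d'"
proof -
  from assms(1) obtain i j where "i < N" "j < N" "E i j"
    unfolding strongly_regular_def by blast
  moreover from assms(1) obtain i' j' where "i' < N" "j' < N" "i' \<noteq> j'" "\<not> E i' j'"
    unfolding strongly_regular_def by blast
  ultimately show ?thesis
    using assms unfolding strongly_regular_def by metis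
qed

lemma conference_graph_iff_params:
  assumes "strongly_regular N E N k e d"
  shows "conference_graph N E \<longleftrightarrow> N = 4*d + 1 \<and> k = 2*d \<and> e + 1 = d"
proof
  assume "conference_graph N E"
  then obtain t where "1 \<le> t" "strongly_regular N E (4*t + 1) (2*t) (t - 1) t"
    unfolding conference_graph_def by blast
  then show "N = 4*d + 1 \<and> k = 2*d \<and> e + 1 = d"
    using strongly_regular_params_unique[OF assms] by fastforce
next
  assume "N = 4*d + 1 \<and> k = 2*d \<and> e + 1 = d"
  then show "conference_graph N E"
    using assms unfolding conference_graph_def by (intro exI[of _ d]) auto
qed

lemma has_OA_params_iff:
  assumes "strongly_regular N E N k e d"
  shows "has_OA_params N E n m \<longleftrightarrow>
    N = n^2 \<and> k = m*(n-1) \<and> int e = int m^2 - 3*int m + int n \<and> d = m*(m-1)"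
proof
  assume "has_OA_params N E n m"
  then obtain e' where "int e' = int m^2 - 3*int m + int n"
    "strongly_regular N E (n^2) (m*(n-1)) e' (m*(m-1))"
    unfolding has_OA_params_def by blast
  then show "N = n^2 \<and> k = m*(n-1) \<and> int e = int m^2 - 3*int m + int n \<and> d = m*(m-1)"
    using strongly_regular_params_unique[OF assms] by fastforce
next
  assume "N = n^2 \<and> k = m*(n-1) \<and> int e = int m^2 - 3*int m + int n \<and> d = m*(m-1)"
  then show "has_OA_params N E n m"
    using assms unfolding has_OA_params_def by blast
qed

lemma graph_connected_noncomplete_path2:
  assumes conn: "graph_connected N F" and noncomplete: "\<not> (\<forall>i<N. \<forall>j<N. i \<noteq> j \<longrightarrow> F i j)"
  shows "\<exists>i j t. i < N \<and> j < N \<and> t < N \<and> i \<noteq> j \<and> \<not> F i j \<and> F i t \<and> F t j"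
proof (rule ccontr)
  assume no_path: "\<not> ?thesis"
  have reach: "i = j \<or> F i j" if "(\<lambda>x y. x < N \<and> y < N \<and> F x y)\<^sup>*\<^sup>* i j" "i < N" for i j
    using that(1)
  proof (induction rule: rtranclp_induct)
    case (step y z)
    then show ?case
      using no_path \<open>i < N\<close> by blast
  qed simp
  obtain i j where "i < N" "j < N" "i \<noteq> j" "\<not> F i j"
    using noncomplete by blast
  with conn reach show False
    unfolding graph_connected_def by blast
qed

text \<open>The complement of a strongly regular graph with parameters \<open>(N, k, e, d)\<close> has parameters
  \<open>(N, k', N - 2k + d - 2, d')\<close> with \<open>k' = N - k - 1\<close> and \<open>d' = N - 2k + e\<close>; below, \<open>2k < N + e\<close>
  and \<open>e + 1 < k\<close> say \<open>0 < d'\<close> and \<open>d' < k'\<close>.\<close>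

lemma primitive_srg_params_ge_1:
  assumes prim: "primitive_srg N E" and srg: "strongly_regular N E N k e d"
  shows "1 \<le> real d \<and> 1 \<le> real k \<and> 1 \<le> real N - 2 * real k + real e \<and> 1 \<le> real N - real k - 1"
proof -
  have simple: "simple_graph N E"
    using srg by (simp add: strongly_regular_def)
  have srg_adj: "srg_matrix N (adj_fun E) k e d"
    by (rule strongly_regular_srg_matrix[OF srg])
  have "\<not> (\<forall>i<N. \<forall>j<N. i \<noteq> j \<longrightarrow> E i j)"
    using srg by (simp add: strongly_regular_def)
  moreover have "graph_connected N E"
    using prim by (simp add: primitive_srg_def)
  ultimately obtain i j t where ijt: "i < N" "j < N" "t < N" "i \<noteq> j" "\<not> E i j" "E i t" "E t j"
    using graph_connected_noncomplete_path2 by blast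
  have "1 \<le> real d \<and> 1 \<le> real k"
    using ijt by (intro srg_matrix_params_ge_1_if_path[OF srg_adj _ ijt(1-4)]) (auto simp: adj_fun_def)
  obtain i0 j0 where "i0 < N" "j0 < N" "E i0 j0"
    using srg unfolding strongly_regular_def by blast
  moreover have "i0 \<noteq> j0"
    using simple \<open>i0 < N\<close> \<open>E i0 j0\<close> unfolding simple_graph_def by blast
  ultimately have "\<not> (\<forall>i<N. \<forall>j<N. i \<noteq> j \<longrightarrow> compl_graph E i j)"
    unfolding compl_graph_def by blast
  moreover have "graph_connected N (compl_graph E)"
    using prim by (simp add: primitive_srg_def)
  ultimately obtain i' j' t' where ijt': "i' < N" "j' < N" "t' < N" "i' \<noteq> j'"
    "\<not> compl_graph E i' j'" "compl_graph E i' t'" "compl_graph E t' j'"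
    using graph_connected_noncomplete_path2 by blast
  have "1 \<le> real N - 2 * real k + real e \<and> 1 \<le> real N - real k - 1"
    using ijt' by (intro srg_matrix_params_ge_1_if_path[OF srg_matrix_complement[OF srg_adj] _ ijt'(1-4)])
      (auto simp: complement_adj_fun[OF simple] adj_fun_def)
  with \<open>1 \<le> real d \<and> 1 \<le> real k\<close> show ?thesis
    by blast
qed

lemma primitive_srg_params:
  assumes prim: "primitive_srg N E" and srg: "strongly_regular N E N k e d"
  shows "0 < d \<and> d < k \<and> 2*k < N + e \<and> e + 1 < k"
proof -
  have ge_1: "1 \<le> real d" "1 \<le> real k" "1 \<le> real N - 2 * real k + real e" "1 \<le> real N - real k - 1"
    using primitive_srg_params_ge_1[OF assms] by auto
  have srg_adj: "srg_matrix N (adj_fun E) k e d"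
    by (rule strongly_regular_srg_matrix[OF srg])
  have "0 < N"
    using ge_1 by simp
  have "0 < (real N - 2 * real k + real e) * real k"
    using ge_1 by (intro mult_pos_pos) linarith+
  also have "\<dots> = (real N - real k - 1) * (real k - real d)"
    using srg_matrix_degree_equation[OF srg_matrix_complement[OF srg_adj] \<open>0 < N\<close>]
    by (simp add: algebra_simps)
  finally have "real d < real k"
    using ge_1 by (simp add: zero_less_mult_iff)
  have "0 < real d * (real N - real k - 1)"
    using ge_1 by (intro mult_pos_pos) linarith+
  also have "\<dots> = real k * (real k - real e - 1)"
    by (rule srg_matrix_degree_equation[OF srg_adj \<open>0 < N\<close>, symmetric])
  finally have "real e + 1 < real k"
    using ge_1 by (simp add: zero_less_mult_iff)
  then show ?thesis
    using ge_1 \<open>real d < real k\<close> by linarith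
qed

lemma energy_eq_of_spectrum:
  assumes "adj_spectrum N E = {#of_real x#} + replicate_mset p (of_real y) + replicate_mset q (of_real z)"
  shows "energy N E = \<bar>x\<bar> + real p * \<bar>y\<bar> + real q * \<bar>z\<bar>"
  using assms by (simp add: energy_def)

lemma primitive_srg_eigendata_energy:
  assumes "primitive_srg N E" "strongly_regular N E N k e d"
  obtains r s f g where "srg_eigendata N k e d r s f g"
    "energy N E = energy N (compl_graph E) \<longleftrightarrow> f = k"
proof -
  have simple: "simple_graph N E"
    using assms(2) by (simp add: strongly_regular_def)
  from primitive_srg_params[OF assms] have "0 < d" "d < k" "2*k < N + e" "e + 1 < k"
    by auto
  then obtain r s f g where data: "srg_eigendata N k e d r s f g"
    and spec: "proots (char_poly (complex_mat_of N (adj_fun E)))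
      = {#of_real k#} + replicate_mset f (of_real r) + replicate_mset g (of_real s)"
    and spec_compl: "proots (char_poly (complex_mat_of N (complement_fun (adj_fun E))))
      = {#of_real (real N - real k - 1)#} + replicate_mset g (of_real (-1 - s))
        + replicate_mset f (of_real (-1 - r))"
    by (rule srg_matrix_eigendata[OF strongly_regular_srg_matrix[OF assms(2)]])
  have "energy N E = \<bar>real k\<bar> + real f * \<bar>r\<bar> + real g * \<bar>s\<bar>"
    using spec unfolding complex_mat_of_adj_fun
    by (intro energy_eq_of_spectrum) (simp only: adj_spectrum_def)
  moreover have "energy N (compl_graph E)
      = \<bar>real N - real k - 1\<bar> + real g * \<bar>-1 - s\<bar> + real f * \<bar>-1 - r\<bar>"
    using spec_compl unfolding complex_mat_of_complement_adj_fun[OF simple]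
    by (intro energy_eq_of_spectrum) (simp only: adj_spectrum_def)
  ultimately show thesis
    using srg_eigendata.energy_balance_iff[OF data] by (intro that[OF data]) simp
qed

lemma isospectral_compl_degree:
  assumes srg: "strongly_regular N E N k e d" and iso: "isospectral N E (compl_graph E)"
  shows "N = 2*k + 1"
proof -
  have simple: "simple_graph N E"
    using srg by (simp add: strongly_regular_def)
  have srg_adj: "srg_matrix N (adj_fun E) k e d"
    by (rule strongly_regular_srg_matrix[OF srg])
  have "0 < N"
    using srg unfolding strongly_regular_def by auto
  have "complex_of_real (real N * real k) = (\<Sum>x\<in>#adj_spectrum N E. x^2)"
    using srg_matrix_proots_power_sums(2)[OF srg_adj]
    by (simp add: adj_spectrum_def complex_mat_of_adj_fun)
  also have "\<dots> = (\<Sum>x\<in>#adj_spectrum N (compl_graph E). x^2)"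
    using iso by (simp add: isospectral_def)
  also have "\<dots> = complex_of_real (real N * (real N - real k - 1))"
    using srg_matrix_proots_power_sums(2)[OF srg_matrix_complement[OF srg_adj]]
    by (simp add: adj_spectrum_def complex_mat_of_complement_adj_fun[OF simple])
  finally have "real N * real k = real N * (real N - real k - 1)"
    by (simp only: of_real_eq_iff)
  then have "real N = real (2*k + 1)"
    using \<open>0 < N\<close> by simp
  then show ?thesis
    by (simp only: of_nat_eq_iff)
qed

theorem mainTheorem13:
  fixes N :: nat and E :: "nat \<Rightarrow> nat \<Rightarrow> bool"
  assumes "primitive_srg N E"
  shows "(energy N E = energy N (compl_graph E) \<longleftrightarrow>
            conference_graph N E \<or>
            (\<exists>n m. n > 0 \<and> m > 0 \<and> m \<notin> {n, n+1} \<and> has_OA_params N E n m))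
       \<and> (energy N E = energy N (compl_graph E) \<and> \<not> conference_graph N E
            \<longrightarrow> \<not> isospectral N E (compl_graph E))"
proof -
  obtain k e d where srg: "strongly_regular N E N k e d"
    using assms unfolding primitive_srg_def is_srg_def by blast
  obtain r s f g where data: "srg_eigendata N k e d r s f g"
    and energy_iff: "energy N E = energy N (compl_graph E) \<longleftrightarrow> f = k"
    using primitive_srg_eigendata_energy[OF assms srg] by blast
  interpret srg_eigendata N k e d r s f g
    by (rule data)
  have params_iff: "f = k \<longleftrightarrow> conference_graph N E \<or>
      (\<exists>n m. n > 0 \<and> m > 0 \<and> m \<notin> {n, n+1} \<and> has_OA_params N E n m)"
    by (simp only: mult_eq_degree_iff_params conference_graph_iff_params[OF srg]
        has_OA_params_iff[OF srg])
  have "\<not> isospectral N E (compl_graph E)" if "f = k" "\<not> conference_graph N E"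
  proof
    assume "isospectral N E (compl_graph E)"
    then have "g = k"
      using isospectral_compl_degree[OF srg] multiplicity_sum \<open>f = k\<close> by simp
    then show False
      using conference_params_if_mults_eq_degree[OF \<open>f = k\<close>] conference_graph_iff_params[OF srg] that(2)
      by simp
  qed
  then show ?thesis
    unfolding energy_iff params_iff[symmetric] by blast
qed

end
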